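(* Let $h:\mathbb{C}\to\mathbb{C}$ be an even entire function, and suppose there are constants $\theta<1$, $K>0$ and $y_0>0$ such that $|h(y)|\le K\,y^{\theta}$ for all real $y\ge y_0$. Then: (1) For every $z$ with $\operatorname{Re}(z)>0$ the integral $\int_{0}^{\infty}\frac{h(y)}{y^2+z^2}\,dy$ converges absolutely, and the function $$h^{\#}(z):=z\int_{0}^{\infty}\frac{h(y)}{y^2+z^2}\,dy$$ is analytic on the half-plane $\operatorname{Re}(z)>0$. (2) $h^{\#}$ extends (analytically continues) to an entire function on $\mathbb{C}$.
   Context: $h^{\#}$ is called the Poisson transform of $h$. *)

theory Defs
  imports "HOL-Complex_Analysis.Complex_Analysis"
begin

definition poisson_transform :: "(complex \<Rightarrow> complex) \<Rightarrow> complex \<Rightarrow> complex" where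
  "poisson_transform h z =
     z * integral {0..} (\<lambda>y::real. h (complex_of_real y) / ((complex_of_real y)\<^sup>2 + z\<^sup>2))"

end

theory Submission
  imports Defs
begin

text \<open>
  Fix \<open>R \<ge> y0\<close>. For \<open>Re z > 0\<close>, evenness of \<open>h\<close> and the partial fraction
  \<open>2iz/(y\<^sup>2 + z\<^sup>2) = 1/(y - iz) - 1/(-y - iz)\<close> turn \<open>z \<integral>\<^sub>0\<^sup>R h(y)/(y\<^sup>2 + z\<^sup>2) dy\<close> into
  \<open>(1/2i) \<integral>\<^sub>-\<^sub>R\<^sup>R h(w)/(w - iz) dw\<close>, and Cauchy's theorem moves this segment onto the
  lower half circle of radius \<open>R\<close>, which stays away from the point \<open>iz\<close> of the upper half plane.
  The resulting Cauchy-type integral is holomorphic for \<open>|z| < R\<close>, and so is the tail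
  \<open>z \<integral>\<^sub>R\<^sup>\<infinity>\<close>, being a locally uniform limit of integrals over compact segments thanks to the
  integrable majorant \<open>y\<^bsup>\<theta>-2\<^esup>\<close>. So on the right half plane \<open>h\<^sup>#\<close> agrees with a function
  holomorphic on the disc of radius \<open>R\<close>; by the identity theorem these functions agree with
  each other and patch together to an entire function.
\<close>

definition poisson_integrand :: "(complex \<Rightarrow> complex) \<Rightarrow> complex \<Rightarrow> real \<Rightarrow> complex" where
  "poisson_integrand h z y = h (complex_of_real y) / ((complex_of_real y)\<^sup>2 + z\<^sup>2)"

lemma poisson_transform_eq_integral:
  "poisson_transform h z = z * integral {0..} (poisson_integrand h z)"
  by (simp add: poisson_transform_def poisson_integrand_def [abs_def])

lemma real_square_plus_square_nonzero:
  assumes "Re z \<noteq> 0"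
  shows "(complex_of_real y)\<^sup>2 + z\<^sup>2 \<noteq> 0"
proof
  assume "(complex_of_real y)\<^sup>2 + z\<^sup>2 = 0"
  then have re: "y\<^sup>2 + (Re z)\<^sup>2 - (Im z)\<^sup>2 = 0" and im: "2 * Re z * Im z = 0"
    by (auto simp: complex_eq_iff power2_eq_square)
  from im assms have "Im z = 0" by simp
  with re assms show False by (simp add: add_nonneg_pos)
qed

lemma norm_real_square_plus_square_ge:
  "norm ((complex_of_real y)\<^sup>2 + z\<^sup>2) \<ge> y\<^sup>2 - (norm z)\<^sup>2"
  using norm_triangle_ineq2 [of "(complex_of_real y)\<^sup>2" "- z\<^sup>2"] by (simp add: norm_power)

lemma real_square_plus_square_nonzero_if_norm_less:
  assumes "norm z < y"
  shows "(complex_of_real y)\<^sup>2 + z\<^sup>2 \<noteq> 0"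
proof -
  have "(norm z)\<^sup>2 < y\<^sup>2" using assms by (simp add: power_strict_mono)
  then show ?thesis using norm_real_square_plus_square_ge [of y z] by auto
qed

lemma has_integral_atLeast_split:
  fixes f :: "real \<Rightarrow> 'a::banach"
  assumes "a \<le> b" "f integrable_on {a..b}" "f integrable_on {b..}"
  shows "(f has_integral integral {a..b} f + integral {b..} f) {a..}"
proof -
  have "(f has_integral integral {a..b} f + integral {b..} f) ({a..b} \<union> {b..})"
    by (rule has_integral_Un) (use assms in auto)
  moreover have "{a..b} \<union> {b..} = {a..}" using assms(1) by auto
  ultimately show ?thesis by simp
qed

lemma has_integral_powr_tail:
  fixes a \<theta> C :: real
  assumes "\<theta> < 1" "a > 0"
  shows "((\<lambda>y. C * y powr (\<theta> - 2)) has_integral C * a powr (\<theta> - 1) / (1 - \<theta>)) {a..}"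
proof -
  have "((\<lambda>y. C * y powr (\<theta> - 2)) has_integral C * (- (a powr (\<theta> - 2 + 1)) / (\<theta> - 2 + 1))) {a..}"
    using assms by (intro has_integral_mult_right has_integral_powr_to_inf) auto
  moreover have "C * (- (a powr (\<theta> - 2 + 1)) / (\<theta> - 2 + 1)) = C * a powr (\<theta> - 1) / (1 - \<theta>)"
    using assms(1) by (simp add: field_simps)
  ultimately show ?thesis by simp
qed

lemma holomorphic_on_Cauchy_integral_part_circlepath:
  assumes "continuous_on (path_image (part_circlepath c r s t)) f"
  shows "(\<lambda>w. contour_integral (part_circlepath c r s t) (\<lambda>u. f u / (u - w)))
           holomorphic_on - path_image (part_circlepath c r s t)"
proof -
  let ?\<gamma> = "part_circlepath c r s t"
  let ?F = "\<lambda>w. contour_integral ?\<gamma> (\<lambda>u. f u / (u - w))"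
  have "open (- path_image ?\<gamma>)" by (simp add: closed_valid_path_image open_Compl)
  have "((\<lambda>u. f u / (u - w) ^ 1) has_contour_integral ?F w) ?\<gamma>"
    if "w \<in> - path_image ?\<gamma> - path_image ?\<gamma>" for w
  proof -
    have "continuous_on (path_image ?\<gamma>) (\<lambda>u. f u / (u - w))"
      using assms that by (intro continuous_intros) auto
    then show ?thesis
      by (simp add: contour_integrable_continuous_part_circlepath has_contour_integral_integral)
  qed
  moreover have "norm (vector_derivative ?\<gamma> (at x)) \<le> \<bar>r\<bar> * \<bar>t - s\<bar>" for x
    by (simp add: vector_derivative_part_circlepath norm_mult flip: of_real_diff)
  ultimately have "\<exists>f'. (?F has_field_derivative f') (at w)" if "w \<in> - path_image ?\<gamma>" for w
    using Cauchy_next_derivative(2) [where f' = f and f = ?F and k = 1 and \<gamma> = ?\<gamma>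
        and B = "\<bar>r\<bar> * \<bar>t - s\<bar>" and S = "- path_image ?\<gamma>", OF assms] \<open>open (- path_image ?\<gamma>)\<close> that
    by auto
  with \<open>open (- path_image ?\<gamma>)\<close> show ?thesis by (simp add: holomorphic_on_open)
qed

lemma entire_extension_from_discs:
  fixes F :: "real \<Rightarrow> complex \<Rightarrow> complex" and f :: "complex \<Rightarrow> complex"
  assumes "open S"
    and holo: "\<And>R. R \<ge> R0 \<Longrightarrow> F R holomorphic_on ball 0 R"
    and agree: "\<And>R z. R \<ge> R0 \<Longrightarrow> z \<in> S \<Longrightarrow> norm z < R \<Longrightarrow> F R z = f z"
    and meets: "\<And>R. R \<ge> R0 \<Longrightarrow> ball 0 R \<inter> S \<noteq> {}"
  shows "\<exists>g. g holomorphic_on UNIV \<and> (\<forall>z\<in>S. g z = f z)"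
proof -
  have consistent: "F R1 z = F R2 z" if "R1 \<ge> R0" "R2 \<ge> R0" "norm z < min R1 R2" for R1 R2 z
  proof (rule analytic_continuation_open [of "ball 0 (min R1 R2) \<inter> S" "ball 0 (min R1 R2)" "F R1" "F R2"])
    show "F R1 holomorphic_on ball 0 (min R1 R2)"
      using holo [OF that(1)] by (rule holomorphic_on_subset) (simp add: subset_ball)
    show "F R2 holomorphic_on ball 0 (min R1 R2)"
      using holo [OF that(2)] by (rule holomorphic_on_subset) (simp add: subset_ball)
    show "ball 0 (min R1 R2) \<inter> S \<noteq> {}" using meets that by (simp add: min_def)
    show "F R1 w = F R2 w" if "w \<in> ball 0 (min R1 R2) \<inter> S" for w
      using that agree \<open>R1 \<ge> R0\<close> \<open>R2 \<ge> R0\<close> by simp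
  qed (use \<open>open S\<close> that in auto)
  define radius where "radius z = max R0 (norm z + 1)" for z :: complex
  define g where "g z = F (radius z) z" for z
  have "g field_differentiable at z" for z
  proof -
    have "g holomorphic_on ball 0 (radius z)"
    proof (rule holomorphic_transform [OF holo])
      show "F (radius z) w = g w" if "w \<in> ball 0 (radius z)" for w
        using that by (auto simp: g_def radius_def intro!: consistent)
    qed (simp add: radius_def)
    moreover have "z \<in> ball 0 (radius z)" by (simp add: radius_def)
    ultimately show ?thesis using holomorphic_on_imp_differentiable_at by blast
  qed
  then have "g holomorphic_on UNIV" by (simp add: holomorphic_on_open field_differentiable_def)
  moreover have "g z = f z" if "z \<in> S" for z
    using that by (auto simp: g_def radius_def intro!: agree)
  ultimately show ?thesis by blast
qed

locale sublinear_growth =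
  fixes h :: "complex \<Rightarrow> complex" and \<theta> K y0 :: real
  assumes continuous: "continuous_on UNIV h"
    and theta: "\<theta> < 1" and y0: "y0 > 0"
    and bound: "\<And>y::real. y \<ge> y0 \<Longrightarrow> norm (h (complex_of_real y)) \<le> K * y powr \<theta>"
begin

lemma continuous_on_poisson_integrand:
  "(\<And>y. y \<in> A \<Longrightarrow> (complex_of_real y)\<^sup>2 + z\<^sup>2 \<noteq> 0) \<Longrightarrow> continuous_on A (poisson_integrand h z)"
  unfolding poisson_integrand_def [abs_def]
  by (intro continuous_intros continuous_on_compose2 [OF continuous]) auto

lemma norm_poisson_integrand_le:
  assumes "R \<ge> y0" "y \<ge> R" "norm z \<le> r" "r < R"
  shows "norm (poisson_integrand h z y) \<le> K * R\<^sup>2 / (R\<^sup>2 - r\<^sup>2) * y powr (\<theta> - 2)"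
proof -
  have "R > 0" "y > 0" using assms y0 by linarith+
  have "r \<ge> 0" using assms(3) norm_ge_zero order_trans by blast
  define c where "c = (R\<^sup>2 - r\<^sup>2) / R\<^sup>2"
  have "c > 0" unfolding c_def using \<open>R > 0\<close> \<open>r \<ge> 0\<close> assms(4) by (simp add: power_strict_mono)
  have "R\<^sup>2 \<le> y\<^sup>2" using assms \<open>R > 0\<close> by (simp add: power_mono)
  then have "1 \<le> y\<^sup>2 / R\<^sup>2" using \<open>R > 0\<close> by simp
  then have "r\<^sup>2 * 1 \<le> r\<^sup>2 * (y\<^sup>2 / R\<^sup>2)" by (rule mult_left_mono) simp
  moreover have "(norm z)\<^sup>2 \<le> r\<^sup>2" using assms by (simp add: power_mono)
  ultimately have "r\<^sup>2 * (y\<^sup>2 / R\<^sup>2) \<ge> (norm z)\<^sup>2" by linarith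
  moreover have "c * y\<^sup>2 = y\<^sup>2 - r\<^sup>2 * (y\<^sup>2 / R\<^sup>2)" using \<open>R > 0\<close> by (simp add: c_def field_simps)
  ultimately have den: "norm ((complex_of_real y)\<^sup>2 + z\<^sup>2) \<ge> c * y\<^sup>2"
    using norm_real_square_plus_square_ge [of y z] by linarith
  have "norm (poisson_integrand h z y) = norm (h (complex_of_real y)) / norm ((complex_of_real y)\<^sup>2 + z\<^sup>2)"
    by (simp add: poisson_integrand_def norm_divide)
  also have "\<dots> \<le> (K * y powr \<theta>) / (c * y\<^sup>2)"
  proof (rule frac_le)
    show "norm (h (complex_of_real y)) \<le> K * y powr \<theta>" using bound assms by simp
    then show "0 \<le> K * y powr \<theta>" using norm_ge_zero order_trans by blast
  qed (use den \<open>c > 0\<close> \<open>y > 0\<close> in auto)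
  also have "\<dots> = K * R\<^sup>2 / (R\<^sup>2 - r\<^sup>2) * y powr (\<theta> - 2)"
    using \<open>y > 0\<close> \<open>R > 0\<close> by (simp add: c_def powr_diff field_simps)
  finally show ?thesis .
qed

lemma poisson_integrand_absolutely_integrable_tail:
  assumes "R \<ge> y0" "norm z < R"
  shows "poisson_integrand h z absolutely_integrable_on {R..}"
proof (rule measurable_bounded_by_integrable_imp_absolutely_integrable)
  show "poisson_integrand h z \<in> borel_measurable (lebesgue_on {R..})"
    using assms by (intro continuous_imp_measurable_on_sets_lebesgue continuous_on_poisson_integrand
        real_square_plus_square_nonzero_if_norm_less) auto
  have "R > 0" using assms y0 by linarith
  then show "(\<lambda>y. K * R\<^sup>2 / (R\<^sup>2 - (norm z)\<^sup>2) * y powr (\<theta> - 2)) integrable_on {R..}"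
    using has_integral_powr_tail [OF theta] by blast
  show "norm (poisson_integrand h z y) \<le> K * R\<^sup>2 / (R\<^sup>2 - (norm z)\<^sup>2) * y powr (\<theta> - 2)"
    if "y \<in> {R..}" for y
    using norm_poisson_integrand_le [OF assms(1) _ order_refl assms(2)] that by auto
qed simp

lemma poisson_integrand_integrable_tail:
  "R \<ge> y0 \<Longrightarrow> norm z < R \<Longrightarrow> poisson_integrand h z integrable_on {R..}"
  using poisson_integrand_absolutely_integrable_tail set_lebesgue_integral_eq_integral(1) by blast

lemma poisson_integrand_integrable_segment:
  "norm z < a \<Longrightarrow> poisson_integrand h z integrable_on {a..b}"
  by (intro integrable_continuous_interval continuous_on_poisson_integrand
      real_square_plus_square_nonzero_if_norm_less) auto

lemma poisson_integrand_absolutely_integrable: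
  assumes "Re z > 0"
  shows "poisson_integrand h z absolutely_integrable_on {0..}"
proof -
  define R where "R = max y0 (norm z + 1)"
  have "poisson_integrand h z absolutely_integrable_on ({0..R} \<union> {R..})"
  proof (rule absolutely_integrable_Un)
    show "poisson_integrand h z absolutely_integrable_on {0..R}"
      using assms by (intro absolutely_integrable_continuous_real continuous_on_poisson_integrand
          real_square_plus_square_nonzero) auto
    show "poisson_integrand h z absolutely_integrable_on {R..}"
      by (rule poisson_integrand_absolutely_integrable_tail) (auto simp: R_def)
  qed
  moreover have "{0..R} \<union> {R..} = {0..}" using y0 by (auto simp: R_def)
  ultimately show ?thesis by simp
qed

lemma norm_tail_integral_le:
  assumes "R \<ge> y0" "norm z \<le> r" "r < R" "b \<ge> R"
  shows "norm (integral {b..} (poisson_integrand h z))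
           \<le> K * R\<^sup>2 / (R\<^sup>2 - r\<^sup>2) * b powr (\<theta> - 1) / (1 - \<theta>)"
proof -
  have "b > 0" using assms y0 by linarith
  have majorant: "((\<lambda>y. K * R\<^sup>2 / (R\<^sup>2 - r\<^sup>2) * y powr (\<theta> - 2))
                    has_integral K * R\<^sup>2 / (R\<^sup>2 - r\<^sup>2) * b powr (\<theta> - 1) / (1 - \<theta>)) {b..}"
    using has_integral_powr_tail [OF theta \<open>b > 0\<close>] .
  have "norm (integral {b..} (poisson_integrand h z))
          \<le> integral {b..} (\<lambda>y. K * R\<^sup>2 / (R\<^sup>2 - r\<^sup>2) * y powr (\<theta> - 2))"
  proof (rule integral_norm_bound_integral)
    show "poisson_integrand h z integrable_on {b..}"
      by (rule poisson_integrand_integrable_tail) (use assms in auto)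
    show "(\<lambda>y. K * R\<^sup>2 / (R\<^sup>2 - r\<^sup>2) * y powr (\<theta> - 2)) integrable_on {b..}"
      using majorant by blast
    show "norm (poisson_integrand h z y) \<le> K * R\<^sup>2 / (R\<^sup>2 - r\<^sup>2) * y powr (\<theta> - 2)"
      if "y \<in> {b..}" for y
      using norm_poisson_integrand_le [OF assms(1) _ assms(2,3)] that assms(4) by auto
  qed
  also have "\<dots> = K * R\<^sup>2 / (R\<^sup>2 - r\<^sup>2) * b powr (\<theta> - 1) / (1 - \<theta>)"
    using majorant by (rule integral_unique)
  finally show ?thesis .
qed

lemma segment_integral_holomorphic:
  "(\<lambda>z. integral {a..b} (poisson_integrand h z)) holomorphic_on ball 0 a"
proof -
  have nonzero: "(complex_of_real t)\<^sup>2 + z\<^sup>2 \<noteq> 0" if "z \<in> ball 0 a" "t \<in> cbox a b" for z t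
    using that by (intro real_square_plus_square_nonzero_if_norm_less) auto
  have "(\<lambda>z. integral (cbox a b) (poisson_integrand h z)) holomorphic_on ball 0 a"
  proof (rule leibniz_rule_holomorphic)
    show "((\<lambda>z. poisson_integrand h z t) has_field_derivative
            - h (complex_of_real t) * (2 * z) / ((complex_of_real t)\<^sup>2 + z\<^sup>2)\<^sup>2) (at z within ball 0 a)"
      if "z \<in> ball 0 a" "t \<in> cbox a b" for z t
      using nonzero [OF that] unfolding poisson_integrand_def
      by (auto intro!: derivative_eq_intros simp: power2_eq_square field_simps)
    show "poisson_integrand h z integrable_on cbox a b" if "z \<in> ball 0 a" for z
      using poisson_integrand_integrable_segment that by simp
    show "continuous_on (ball 0 a \<times> cbox a b)
            (\<lambda>(z, t). - h (complex_of_real t) * (2 * z) / ((complex_of_real t)\<^sup>2 + z\<^sup>2)\<^sup>2)"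
      unfolding split_beta
      by (intro continuous_intros continuous_on_compose2 [OF continuous]) (use nonzero in auto)
  qed simp
  then show ?thesis by simp
qed

lemma tail_integral_uniform_limit:
  assumes "R \<ge> y0" "r < R"
  shows "uniform_limit (cball 0 r) (\<lambda>n z. integral {R..R + real n} (poisson_integrand h z))
           (\<lambda>z. integral {R..} (poisson_integrand h z)) sequentially"
  unfolding uniform_limit_iff
proof (intro allI impI)
  fix e :: real
  assume "e > 0"
  define C where "C = K * R\<^sup>2 / (R\<^sup>2 - r\<^sup>2)"
  have "filterlim (\<lambda>n::nat. R + real n) at_top sequentially" by real_asymp
  then have "((\<lambda>n::nat. C * (R + real n) powr (\<theta> - 1) / (1 - \<theta>)) \<longlongrightarrow> C * 0 / (1 - \<theta>)) sequentially"
    using theta by (intro tendsto_intros tendsto_neg_powr) auto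
  then have "\<forall>\<^sub>F n in sequentially. C * (R + real n) powr (\<theta> - 1) / (1 - \<theta>) < e"
    using \<open>e > 0\<close> by (simp add: order_tendsto_iff)
  then show "\<forall>\<^sub>F n in sequentially. \<forall>z\<in>cball 0 r.
               dist (integral {R..R + real n} (poisson_integrand h z))
                 (integral {R..} (poisson_integrand h z)) < e"
  proof eventually_elim
    case (elim n)
    show ?case
    proof
      fix z :: complex
      assume "z \<in> cball 0 r"
      then have "norm z < R" using assms by simp
      have "integral {R..} (poisson_integrand h z)
              = integral {R..R + real n} (poisson_integrand h z)
                + integral {R + real n..} (poisson_integrand h z)"
        using \<open>norm z < R\<close> assms
        by (intro integral_unique has_integral_atLeast_split poisson_integrand_integrable_segment
            poisson_integrand_integrable_tail) auto
      moreover have "norm (integral {R + real n..} (poisson_integrand h z))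
                       \<le> C * (R + real n) powr (\<theta> - 1) / (1 - \<theta>)"
        unfolding C_def using \<open>z \<in> cball 0 r\<close> assms by (intro norm_tail_integral_le) auto
      ultimately show "dist (integral {R..R + real n} (poisson_integrand h z))
                         (integral {R..} (poisson_integrand h z)) < e"
        using elim by (simp add: dist_norm)
    qed
  qed
qed

lemma tail_integral_holomorphic:
  assumes "R \<ge> y0"
  shows "(\<lambda>z. integral {R..} (poisson_integrand h z)) holomorphic_on ball 0 R"
proof -
  have "(\<lambda>z. integral {R..} (poisson_integrand h z)) field_differentiable at z" if "z \<in> ball 0 R" for z
  proof -
    define r where "r = (norm z + R) / 2"
    have "r < R" "z \<in> ball 0 r" using that by (auto simp: r_def)
    have segment: "(\<lambda>z. integral {R..R + real n} (poisson_integrand h z)) holomorphic_on cball 0 r" for n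
      using segment_integral_holomorphic by (rule holomorphic_on_subset) (use \<open>r < R\<close> in auto)
    then have "\<forall>\<^sub>F n in sequentially.
                 continuous_on (cball 0 r) (\<lambda>z. integral {R..R + real n} (poisson_integrand h z))
                 \<and> (\<lambda>z. integral {R..R + real n} (poisson_integrand h z)) holomorphic_on ball 0 r"
      by (auto intro!: always_eventually holomorphic_on_imp_continuous_on
          intro: holomorphic_on_subset [OF segment ball_subset_cball])
    with holomorphic_uniform_limit [OF _ tail_integral_uniform_limit [OF assms \<open>r < R\<close>]]
    have "(\<lambda>z. integral {R..} (poisson_integrand h z)) holomorphic_on ball 0 r" by auto
    with \<open>z \<in> ball 0 r\<close> show ?thesis using holomorphic_on_imp_differentiable_at by blast
  qed
  then show ?thesis by (simp add: holomorphic_on_open field_differentiable_def)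
qed

end

definition lower_semicircle :: "real \<Rightarrow> real \<Rightarrow> complex" where
  "lower_semicircle R = part_circlepath 0 R pi (2 * pi)"

lemma pathstart_lower_semicircle [simp]: "pathstart (lower_semicircle R) = - complex_of_real R"
  by (simp add: lower_semicircle_def)

lemma pathfinish_lower_semicircle [simp]: "pathfinish (lower_semicircle R) = complex_of_real R"
proof -
  have "exp (\<i> * (2 * complex_of_real pi)) = 1" using exp_two_pi_i by (simp add: mult.commute)
  then show ?thesis by (simp add: lower_semicircle_def)
qed

lemma valid_path_lower_semicircle [simp]: "valid_path (lower_semicircle R)"
  by (simp add: lower_semicircle_def)

lemma path_image_lower_semicircle_subset_sphere:
  "R \<ge> 0 \<Longrightarrow> path_image (lower_semicircle R) \<subseteq> sphere 0 R"
  unfolding lower_semicircle_def by (rule path_image_part_circlepath_subset) auto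

lemma Im_le_0_on_lower_semicircle:
  assumes "R \<ge> 0" "w \<in> path_image (lower_semicircle R)"
  shows "Im w \<le> 0"
proof -
  obtain x where x: "pi \<le> x" "x \<le> 2 * pi" "w = complex_of_real R * exp (\<i> * complex_of_real x)"
    using assms(2) by (auto simp: lower_semicircle_def path_image_part_circlepath)
  have "sin x \<le> 0"
    using x by (cases "x = 2 * pi") (auto intro: sin_le_zero)
  then show ?thesis using x assms(1) by (simp add: Im_exp mult_nonneg_nonpos)
qed

lemma poisson_integral_segment_eq_linepath_integral:
  assumes continuous: "continuous_on UNIV h" and even: "\<And>z. h (- z) = h z"
    and "Re z \<noteq> 0" "R > 0"
  shows "z * integral {0..R} (poisson_integrand h z)
           = contour_integral (linepath (- complex_of_real R) (complex_of_real R)) (\<lambda>w. h w / (w - \<i> * z)) / (2 * \<i>)"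
proof -
  define q where "q = (\<lambda>x. h (complex_of_real x) / (complex_of_real x - \<i> * z))"
  have "z \<noteq> 0" using assms by auto
  have "complex_of_real x - \<i> * z \<noteq> 0" for x
    using \<open>Re z \<noteq> 0\<close> by (auto simp: complex_eq_iff)
  then have cont_q: "continuous_on A q" for A
    unfolding q_def by (intro continuous_intros continuous_on_compose2 [OF continuous]) auto
  have pair: "q x + q (- x) = 2 * \<i> * z * poisson_integrand h z x" for x
  proof -
    define a b where "a = complex_of_real x - \<i> * z" and "b = complex_of_real x + \<i> * z"
    have "a \<noteq> 0" "b \<noteq> 0" using \<open>Re z \<noteq> 0\<close> by (auto simp: a_def b_def complex_eq_iff)
    have "b - a = 2 * \<i> * z" "a * b = (complex_of_real x)\<^sup>2 + z\<^sup>2"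
      by (simp_all add: a_def b_def algebra_simps power2_eq_square)
    have "q x + q (- x) = h (complex_of_real x) / a + h (complex_of_real x) / (- b)"
      using even [of "complex_of_real x"] by (simp add: q_def a_def b_def)
    also have "\<dots> = h (complex_of_real x) * (b - a) / (a * b)"
      using \<open>a \<noteq> 0\<close> \<open>b \<noteq> 0\<close> by (simp add: field_simps)
    also have "\<dots> = 2 * \<i> * z * poisson_integrand h z x"
      by (simp add: \<open>b - a = 2 * \<i> * z\<close> \<open>a * b = _\<close> poisson_integrand_def)
    finally show ?thesis .
  qed
  define I_pos where "I_pos = integral {0..R} q"
  define I_neg where "I_neg = integral {0..R} (\<lambda>x. q (- x))"
  have pos: "(q has_integral I_pos) {0..R}"
    unfolding I_pos_def by (intro integrable_integral integrable_continuous_interval cont_q)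
  have neg: "((\<lambda>x. q (- x)) has_integral I_neg) {0..R}"
    unfolding I_neg_def by (intro integrable_integral integrable_continuous_interval
        continuous_on_compose2 [OF cont_q] continuous_intros) auto
  have "(q has_integral I_neg + I_pos) {-R..R}"
    using has_integral_reflect_real [where f = q and i = I_neg and a = "- R" and b = 0] neg pos \<open>R > 0\<close>
    by (intro has_integral_combine [of "-R" 0 R]) auto
  moreover have "contour_integral (linepath (- complex_of_real R) (complex_of_real R)) (\<lambda>w. h w / (w - \<i> * z))
                   = integral {-R..R} q"
    using contour_integral_linepath_Reals_eq [of "- complex_of_real R" "complex_of_real R"] \<open>R > 0\<close>
    by (simp add: q_def)
  ultimately have linepath: "contour_integral (linepath (- complex_of_real R) (complex_of_real R))
                               (\<lambda>w. h w / (w - \<i> * z)) = I_neg + I_pos"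
    by (simp add: integral_unique)
  have "((\<lambda>x. 2 * \<i> * z * poisson_integrand h z x) has_integral I_pos + I_neg) {0..R}"
    using has_integral_add [OF pos neg] by (simp add: pair)
  then have "((\<lambda>x. 2 * \<i> * z * poisson_integrand h z x / (2 * \<i> * z))
               has_integral (I_pos + I_neg) / (2 * \<i> * z)) {0..R}"
    by (rule has_integral_divide)
  then have "(poisson_integrand h z has_integral (I_pos + I_neg) / (2 * \<i> * z)) {0..R}"
    using \<open>z \<noteq> 0\<close> by simp
  then show ?thesis using linepath \<open>z \<noteq> 0\<close> by (simp add: integral_unique field_simps)
qed

lemma linepath_integral_eq_lower_semicircle_integral:
  assumes entire: "h holomorphic_on UNIV" and "Re z > 0" "R \<ge> 0"
  shows "contour_integral (linepath (- complex_of_real R) (complex_of_real R)) (\<lambda>w. h w / (w - \<i> * z))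
           = contour_integral (lower_semicircle R) (\<lambda>w. h w / (w - \<i> * z))"
proof -
  define S where "S = {w. Im w < Re z}"
  define f where "f = (\<lambda>w. h w / (w - \<i> * z))"
  define L where "L = linepath (- complex_of_real R) (complex_of_real R)"
  have holo: "f holomorphic_on S"
    unfolding f_def S_def
    by (auto intro!: holomorphic_intros holomorphic_on_subset [OF entire] simp: complex_eq_iff)
  have "open S" "convex S"
    by (simp_all add: S_def open_halfspace_Im_lt convex_halfspace_Im_lt)
  have "path_image L \<subseteq> S"
    unfolding L_def path_image_linepath
    by (rule closed_segment_subset [OF _ _ \<open>convex S\<close>]) (use assms in \<open>auto simp: S_def\<close>)
  moreover have "path_image (lower_semicircle R) \<subseteq> S"
    using Im_le_0_on_lower_semicircle assms by (force simp: S_def)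
  ultimately have int_L: "f contour_integrable_on L"
    and int_arc: "f contour_integrable_on lower_semicircle R"
    using contour_integrable_holomorphic_simple [OF holo \<open>open S\<close>] by (auto simp: L_def)
  have "(f has_contour_integral 0) (L +++ reversepath (lower_semicircle R))"
    using \<open>path_image L \<subseteq> S\<close> \<open>path_image (lower_semicircle R) \<subseteq> S\<close>
    by (intro Cauchy_theorem_convex_simple [OF holo \<open>convex S\<close>]) (auto simp: L_def path_image_join)
  moreover have "contour_integral (L +++ reversepath (lower_semicircle R)) f
                   = contour_integral L f - contour_integral (lower_semicircle R) f"
    using int_L int_arc contour_integrable_reversepath [of "lower_semicircle R" f]
    by (simp add: L_def contour_integral_reversepath)
  ultimately show ?thesis by (simp add: contour_integral_unique f_def L_def)
qed

locale even_entire_sublinear_growth = sublinear_growth +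
  assumes entire: "h holomorphic_on UNIV" and even: "\<And>z. h (- z) = h z"
begin

definition poisson_continuation :: "real \<Rightarrow> complex \<Rightarrow> complex" where
  "poisson_continuation R z =
     contour_integral (lower_semicircle R) (\<lambda>w. h w / (w - \<i> * z)) / (2 * \<i>)
     + z * integral {R..} (poisson_integrand h z)"

lemma poisson_continuation_holomorphic:
  assumes "R \<ge> y0"
  shows "poisson_continuation R holomorphic_on ball 0 R"
proof -
  have "R \<ge> 0" using assms y0 by linarith
  define F where "F = (\<lambda>w. contour_integral (lower_semicircle R) (\<lambda>u. h u / (u - w)))"
  have "F holomorphic_on - path_image (lower_semicircle R)"
    unfolding F_def lower_semicircle_def
    by (intro holomorphic_on_Cauchy_integral_part_circlepath continuous_on_subset [OF continuous]) simp
  moreover have "(\<lambda>z. \<i> * z) ` ball 0 R \<subseteq> - path_image (lower_semicircle R)"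
    using path_image_lower_semicircle_subset_sphere [OF \<open>R \<ge> 0\<close>] by (auto simp: norm_mult)
  ultimately have "(F \<circ> (\<lambda>z. \<i> * z)) holomorphic_on ball 0 R"
    by (intro holomorphic_on_compose_gen holomorphic_intros)
  then show ?thesis
    unfolding poisson_continuation_def [abs_def]
    by (intro holomorphic_intros tail_integral_holomorphic assms) (simp_all add: F_def o_def)
qed

lemma poisson_continuation_eq_poisson_transform:
  assumes "R \<ge> y0" "Re z > 0" "norm z < R"
  shows "poisson_continuation R z = poisson_transform h z"
proof -
  have "R > 0" using assms y0 by linarith
  have "poisson_integrand h z integrable_on {0..R}"
    using assms by (intro integrable_continuous_interval continuous_on_poisson_integrand
        real_square_plus_square_nonzero) simp
  moreover have "poisson_integrand h z integrable_on {R..}"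
    using assms by (intro poisson_integrand_integrable_tail)
  ultimately have split: "integral {0..} (poisson_integrand h z)
                     = integral {0..R} (poisson_integrand h z) + integral {R..} (poisson_integrand h z)"
    using \<open>R > 0\<close> by (intro integral_unique has_integral_atLeast_split) simp_all
  have "z * integral {0..R} (poisson_integrand h z)
                   = contour_integral (linepath (- complex_of_real R) (complex_of_real R))
                       (\<lambda>w. h w / (w - \<i> * z)) / (2 * \<i>)"
    using assms(2) \<open>R > 0\<close> by (intro poisson_integral_segment_eq_linepath_integral continuous even) simp_all
  also have "\<dots> = contour_integral (lower_semicircle R) (\<lambda>w. h w / (w - \<i> * z)) / (2 * \<i>)"
    using assms(2) \<open>R > 0\<close> by (simp add: linepath_integral_eq_lower_semicircle_integral [OF entire])
  finally show ?thesis
    by (simp add: poisson_continuation_def poisson_transform_eq_integral split distrib_left)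
qed

lemma poisson_transform_entire_extension:
  "\<exists>g. g holomorphic_on UNIV \<and> (\<forall>z. Re z > 0 \<longrightarrow> g z = poisson_transform h z)"
proof -
  have "\<exists>g. g holomorphic_on UNIV \<and> (\<forall>z\<in>{z. Re z > 0}. g z = poisson_transform h z)"
  proof (rule entire_extension_from_discs [OF open_halfspace_Re_gt])
    show "poisson_continuation R holomorphic_on ball 0 R" if "y0 \<le> R" for R
      using that by (rule poisson_continuation_holomorphic)
    show "poisson_continuation R z = poisson_transform h z"
      if "y0 \<le> R" "z \<in> {z. Re z > 0}" "norm z < R" for R z
      using that by (simp add: poisson_continuation_eq_poisson_transform)
    show "ball 0 R \<inter> {z. Re z > 0} \<noteq> {}" if "y0 \<le> R" for R
    proof -
      have "complex_of_real (R / 2) \<in> ball 0 R \<inter> {z. Re z > 0}" using that y0 by simp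
      then show ?thesis by blast
    qed
  qed
  then show ?thesis by blast
qed

end

theorem lemma1:
  fixes h :: "complex \<Rightarrow> complex" and \<theta> K y0 :: real
  assumes entire: "h holomorphic_on UNIV"
    and even: "\<And>z. h (- z) = h z"
    and theta: "\<theta> < 1" and K: "K > 0" and y0: "y0 > 0"
    and bound: "\<And>y::real. y \<ge> y0 \<Longrightarrow> norm (h (complex_of_real y)) \<le> K * y powr \<theta>"
  shows "(\<forall>z. Re z > 0 \<longrightarrow>
            (\<lambda>y::real. h (complex_of_real y) / ((complex_of_real y)\<^sup>2 + z\<^sup>2))
              absolutely_integrable_on {0..})
       \<and> poisson_transform h holomorphic_on {z. Re z > 0}
       \<and> (\<exists>g. g holomorphic_on UNIV \<and> (\<forall>z. Re z > 0 \<longrightarrow> g z = poisson_transform h z))"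
proof -
  interpret even_entire_sublinear_growth h \<theta> K y0
  proof unfold_locales
    show "continuous_on UNIV h" using entire by (rule holomorphic_on_imp_continuous_on)
  qed (fact assms)+
  obtain g where g: "g holomorphic_on UNIV" "\<And>z. Re z > 0 \<Longrightarrow> g z = poisson_transform h z"
    using poisson_transform_entire_extension by blast
  have "poisson_transform h holomorphic_on {z. Re z > 0}"
  proof (rule holomorphic_transform)
    show "g holomorphic_on {z. Re z > 0}" using g(1) by (rule holomorphic_on_subset) simp
    show "g z = poisson_transform h z" if "z \<in> {z. Re z > 0}" for z using that g(2) by simp
  qed
  moreover have "(\<lambda>y::real. h (complex_of_real y) / ((complex_of_real y)\<^sup>2 + z\<^sup>2))
                   absolutely_integrable_on {0..}" if "Re z > 0" for z
    using poisson_integrand_absolutely_integrable [OF that] by (simp add: poisson_integrand_def [abs_def])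
  ultimately show ?thesis using g by blast
qed

end
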